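(* Let $0<\sigma<\tau$, $\mu>0$, $\kappa_2\in(0,1)$ and $t_2\in(\sigma,\tau)$. For every $\omega\ge(1-\kappa_2)/(\tau-t_2)$, any solution $(x(t),y(t))$ on $[\sigma,\tau]$ of \[ x'=y,\qquad y'=\mu a^-(t)g(x) \] with $x(t_2)\ge\kappa_2$ and $y(t_2)\ge\omega$ satisfies $x(\tau)\ge1$ and $y(\tau)\ge\omega$.
   Context: $a\in L^1(\sigma,\tau)$ with negative part $a^-\ge0$. $g\colon\mathbb{R}\to[0,+\infty)$ is the extension by zero outside $[0,1]$ of a locally Lipschitz continuous function $g\colon[0,1]\to[0,+\infty)$ with $g(0)=g(1)=0$, $g(s)>0$ for $0<s<1$ and $\lim_{s\to0^+}g(s)/s=0$. Solutions are in the Carathéodory sense. *)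

theory Defs
  imports "HOL-Analysis.Analysis"
begin

definition neg_part :: "(real \<Rightarrow> real) \<Rightarrow> real \<Rightarrow> real" where
  "neg_part a t = max 0 (- a t)"

text \<open>Caratheodory solution on [sigma,tau] of x' = y, y' = mu a^-(t) g(x):
  x and y are absolutely continuous and satisfy the equations a.e.;
  equivalently (Lebesgue fundamental theorem of calculus) the right-hand sides
  are Lebesgue integrable on [sigma,tau] and x, y satisfy the integral equations.\<close>
definition carath_solution ::
  "real \<Rightarrow> real \<Rightarrow> real \<Rightarrow> (real \<Rightarrow> real) \<Rightarrow> (real \<Rightarrow> real)
     \<Rightarrow> (real \<Rightarrow> real) \<Rightarrow> (real \<Rightarrow> real) \<Rightarrow> bool" where
  "carath_solution \<sigma> \<tau> \<mu> a g x y \<longleftrightarrow>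
     set_integrable lborel {\<sigma>..\<tau>} y \<and>
     set_integrable lborel {\<sigma>..\<tau>} (\<lambda>s. \<mu> * neg_part a s * g (x s)) \<and>
     (\<forall>t\<in>{\<sigma>..\<tau>}. x t = x \<sigma> + (LINT s:{\<sigma>..t}|lborel. y s)) \<and>
     (\<forall>t\<in>{\<sigma>..\<tau>}. y t = y \<sigma> + (LINT s:{\<sigma>..t}|lborel. \<mu> * neg_part a s * g (x s)))"

end

theory Submission
  imports Defs
begin

text \<open>On the right of \<open>t\<^sub>2\<close> the equation \<open>y' = \<mu> a\<^sup>-(t) g(x) \<ge> 0\<close> keeps \<open>y\<close> nondecreasing,
  so \<open>y \<ge> \<omega>\<close> on \<open>[t\<^sub>2, \<tau>]\<close>; integrating \<open>x' = y\<close> then gives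
  \<open>x(\<tau>) \<ge> \<kappa>\<^sub>2 + (\<tau> - t\<^sub>2) \<omega> \<ge> 1\<close>.\<close>

lemma set_integral_split_at:
  fixes f :: "real \<Rightarrow> real"
  assumes "set_integrable lborel {s..T} f" "s \<le> u" "u \<le> t" "t \<le> T"
  shows "(LINT r:{s..t}|lborel. f r) = (LINT r:{s..u}|lborel. f r) + (LINT r:{u<..t}|lborel. f r)"
proof -
  have "{s..t} = {s..u} \<union> {u<..t}"
    using assms by auto
  moreover have "set_integrable lborel {s..u} f" "set_integrable lborel {u<..t} f"
    using assms by (auto intro: set_integrable_subset[OF assms(1)])
  ultimately show ?thesis
    using set_integral_Un[OF ivl_disj_int_two(8)] by simp
qed

lemma integral_equation_increment:
  fixes f h :: "real \<Rightarrow> real"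
  assumes h: "set_integrable lborel {\<sigma>..\<tau>} h"
    and f: "\<forall>t\<in>{\<sigma>..\<tau>}. f t = f \<sigma> + (LINT s:{\<sigma>..t}|lborel. h s)"
    and "\<sigma> \<le> u" "u \<le> t" "t \<le> \<tau>"
  shows "f t = f u + (LINT s:{u<..t}|lborel. h s)"
proof -
  have "f t = f \<sigma> + (LINT s:{\<sigma>..t}|lborel. h s)" "f u = f \<sigma> + (LINT s:{\<sigma>..u}|lborel. h s)"
    using f[rule_format, of t] f[rule_format, of u] assms(3-5) by simp_all
  with set_integral_split_at[OF h assms(3-5)] show ?thesis
    by linarith
qed

lemma integral_equation_lower_bound:
  fixes f h :: "real \<Rightarrow> real"
  assumes h: "set_integrable lborel {\<sigma>..\<tau>} h"
    and f: "\<forall>t\<in>{\<sigma>..\<tau>}. f t = f \<sigma> + (LINT s:{\<sigma>..t}|lborel. h s)"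
    and "\<sigma> \<le> u" "u \<le> t" "t \<le> \<tau>"
    and h_ge: "\<And>s. u < s \<Longrightarrow> s \<le> t \<Longrightarrow> c \<le> h s"
  shows "f u + (t - u) * c \<le> f t"
proof -
  have "(LINT s:{u<..t}|lborel. c) \<le> (LINT s:{u<..t}|lborel. h s)"
  proof (rule set_integral_mono)
    show "set_integrable lborel {u<..t} (\<lambda>_. c)"
      unfolding set_integrable_def
      by (rule integrable_scaleR_left) (use assms(4) in \<open>simp add: integrable_indicator_iff\<close>)
    show "set_integrable lborel {u<..t} h"
      using assms(3-5) by (auto intro: set_integrable_subset[OF h])
  qed (use h_ge in auto)
  moreover have "(LINT s:{u<..t}|lborel. c) = (t - u) * c"
    using assms(4) by (simp add: set_integral_const)
  ultimately show ?thesis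
    using integral_equation_increment[OF h f assms(3-5)] by linarith
qed

theorem lemma2p6:
  fixes \<sigma> \<tau> \<mu> \<kappa>\<^sub>2 t\<^sub>2 \<omega> :: real
    and a g x y :: "real \<Rightarrow> real"
  assumes "0 < \<sigma>" and "\<sigma> < \<tau>" and "\<mu> > 0"
    and "0 < \<kappa>\<^sub>2" and "\<kappa>\<^sub>2 < 1"
    and "\<sigma> < t\<^sub>2" and "t\<^sub>2 < \<tau>"
    and a_L1: "set_integrable lborel {\<sigma>..\<tau>} a"
    and g_nonneg: "\<forall>s. g s \<ge> 0"
    and g_zero_out: "\<forall>s. s \<notin> {0..1} \<longrightarrow> g s = 0"
    and g_loc_lip: "\<forall>s\<in>{0..1}. \<exists>\<epsilon>>0. \<exists>L. L-lipschitz_on (cball s \<epsilon> \<inter> {0..1}) g"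
    and g0: "g 0 = 0" and g1: "g 1 = 0"
    and g_pos: "\<forall>s. 0 < s \<and> s < 1 \<longrightarrow> g s > 0"
    and g_lim: "((\<lambda>s. g s / s) \<longlongrightarrow> 0) (at_right 0)"
    and \<omega>: "\<omega> \<ge> (1 - \<kappa>\<^sub>2) / (\<tau> - t\<^sub>2)"
    and sol: "carath_solution \<sigma> \<tau> \<mu> a g x y"
    and "x t\<^sub>2 \<ge> \<kappa>\<^sub>2" and "y t\<^sub>2 \<ge> \<omega>"
  shows "x \<tau> \<ge> 1 \<and> y \<tau> \<ge> \<omega>"
proof -
  define h where "h s = \<mu> * neg_part a s * g (x s)" for s
  have y_int: "set_integrable lborel {\<sigma>..\<tau>} y" and h_int: "set_integrable lborel {\<sigma>..\<tau>} h"
    and x_eq: "\<forall>t\<in>{\<sigma>..\<tau>}. x t = x \<sigma> + (LINT s:{\<sigma>..t}|lborel. y s)"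
    and y_eq: "\<forall>t\<in>{\<sigma>..\<tau>}. y t = y \<sigma> + (LINT s:{\<sigma>..t}|lborel. h s)"
    using sol unfolding carath_solution_def h_def by blast+
  have "0 \<le> h s" for s
    unfolding h_def neg_part_def using g_nonneg \<open>\<mu> > 0\<close> by simp
  then have y_ge_\<omega>: "\<omega> \<le> y t" if "t\<^sub>2 \<le> t" "t \<le> \<tau>" for t
    using integral_equation_lower_bound[OF h_int y_eq, of t\<^sub>2 t 0] that \<open>\<sigma> < t\<^sub>2\<close> \<open>y t\<^sub>2 \<ge> \<omega>\<close>
    by simp
  have "x t\<^sub>2 + (\<tau> - t\<^sub>2) * \<omega> \<le> x \<tau>"
    using \<open>\<sigma> < t\<^sub>2\<close> \<open>t\<^sub>2 < \<tau>\<close> y_ge_\<omega>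
    by (intro integral_equation_lower_bound[OF y_int x_eq]) auto
  moreover have "1 - \<kappa>\<^sub>2 \<le> (\<tau> - t\<^sub>2) * \<omega>"
    using \<omega> \<open>t\<^sub>2 < \<tau>\<close> by (simp add: divide_le_eq mult.commute)
  ultimately show ?thesis
    using \<open>x t\<^sub>2 \<ge> \<kappa>\<^sub>2\<close> y_ge_\<omega>[of \<tau>] \<open>t\<^sub>2 < \<tau>\<close> by auto
qed

end
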